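(* Let $N_1,\dots,N_d$ be positive integers, $\Omega=[N_1]\times\cdots\times[N_d]$, $X\subseteq\Omega$, and let $b:\mathbb{N}\to(0,\infty)$ be a function. If $\chi:X\to\{-1,0,1\}$ is a partial coloring of $X$ such that $|\chi(S)|\le b(|S|)$ for all $S\in\mathcal{C}_X$, then \[ |\chi(A)|\le 2\sum_{s:\,s=2^t}b(s) \] for all $A\in\mathcal{A}_X$, where the sum is over all powers of $2$ ($t=0,1,2,\dots$).
   Context: $[N]=\{1,\dots,N\}$. An arithmetic progression in $d$ dimensions is a set $\{\mathbf{a}+i\mathbf{b}: i=0,\dots,l-1\}$ with $\mathbf{a},\mathbf{b}\in\mathbb{Z}^d$, $\mathbf{b}\ne\mathbf{0}$, $l\in\mathbb{N}$; $\mathcal{A}_{\mathbf{N}}$ is the family of such progressions contained in $\Omega$, and $\mathcal{A}_X=\{A\cap X: A\in\mathcal{A}_{\mathbf{N}}\}$. For $\mathbf{b}\in\mathbb{Z}^d\setminus\{\mathbf{0}\}$, points $\mathbf{x},\mathbf{x}'$ are congruent mod $\mathbf{b}$ if $\mathbf{x}-\mathbf{x}'\in\mathbb{Z}\mathbf{b}$. For each $\mathbf{b}\ne\mathbf{0}$ and each congruence class $I$ of $X$ modulo $\mathbf{b}$ (i.e. the set of elements of $X$ congruent to a given point), list $I=\{\mathbf{x}_1,\dots,\mathbf{x}_l\}$ in increasing order of the dot product $\mathbf{x}_u\cdot\mathbf{b}$ (these are distinct). $\mathcal{C}_X$ is the collection, over all such $(\mathbf{b},I)$, of all sets $\{\mathbf{x}_u:(j-1)s+1\le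 u\le js\}$ where $s=2^t$ ($t\ge0$ an integer) and $1\le j\le\lfloor l/s\rfloor$. For $A\subseteq X$, $\chi(A)=\sum_{x\in A}\chi(x)$. *)

theory Defs
  imports "HOL-Analysis.Analysis"
begin

definition dotz :: "int^'d::finite \<Rightarrow> int^'d \<Rightarrow> int" where
  "dotz x y = (\<Sum>i\<in>UNIV. x$i * y$i)"

definition box :: "('d::finite \<Rightarrow> nat) \<Rightarrow> (int^'d) set" where
  "box N = {x. \<forall>i. 1 \<le> x$i \<and> x$i \<le> int (N i)}"

definition APs :: "('d::finite \<Rightarrow> nat) \<Rightarrow> (int^'d) set set" where
  "APs N = {A. \<exists>a b (l::nat). b \<noteq> 0 \<and> A = (\<lambda>i. a + int i *s b) ` {..<l} \<and> A \<subseteq> box N}"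

definition AX :: "('d::finite \<Rightarrow> nat) \<Rightarrow> (int^'d) set \<Rightarrow> (int^'d) set set" where
  "AX N X = (\<lambda>A. A \<inter> X) ` APs N"

definition cong_mod :: "int^'d::finite \<Rightarrow> int^'d \<Rightarrow> int^'d \<Rightarrow> bool" where
  "cong_mod b x x' \<longleftrightarrow> (\<exists>k::int. x - x' = k *s b)"

definition cong_class :: "(int^'d::finite) set \<Rightarrow> int^'d \<Rightarrow> int^'d \<Rightarrow> (int^'d) set" where
  "cong_class X b x = {x' \<in> X. cong_mod b x x'}"

text \<open>The u-th element (1-indexed) is xs ! (u-1), so the block
  {x_u : (j-1)s+1 <= u <= js} is set (take s (drop ((j-1)s) xs)).\<close>
definition CX :: "(int^'d::finite) set \<Rightarrow> (int^'d) set set" where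
  "CX X = {S. \<exists>b x xs (t::nat) (j::nat). b \<noteq> 0 \<and> x \<in> X \<and>
       distinct xs \<and> set xs = cong_class X b x \<and>
       sorted_wrt (\<lambda>u v. dotz u b < dotz v b) xs \<and>
       1 \<le> j \<and> j \<le> length xs div 2^t \<and>
       S = set (take (2^t) (drop ((j - 1) * 2^t) xs))}"

end

theory Submission
  imports Defs
begin

(* The congruence class of x modulo the difference c of a progression, listed by increasing
   dot product with c, is x + k c for increasing integers k, and a progression through x meets
   X in a contiguous run [p, q) of this list. The run contains a point m divisible by the
   largest power 2^T occurring in it, so that [p, m) and [m, q) are both shorter than 2^T and
   have an endpoint divisible by 2^T. Such a piece is a disjoint union of at most one dyadic
   block of each length 2^t with t < T, and the dyadic blocks of the list are sets of C_X.
   Hence |chi(A)| <= 2 (b 1 + b 2 + ... + b (2^(T-1))). *)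

lemma abs_sum_atLeastLessThan_split_le:
  fixes g :: "nat \<Rightarrow> 'a::ordered_ab_group_add_abs"
  assumes "p \<le> m" "m \<le> q" "\<bar>\<Sum>u\<in>{p..<m}. g u\<bar> \<le> x" "\<bar>\<Sum>u\<in>{m..<q}. g u\<bar> \<le> y"
  shows "\<bar>\<Sum>u\<in>{p..<q}. g u\<bar> \<le> x + y"
proof -
  have "(\<Sum>u\<in>{p..<q}. g u) = (\<Sum>u\<in>{p..<m}. g u) + (\<Sum>u\<in>{m..<q}. g u)"
    using assms(1,2) by (simp add: sum.atLeastLessThan_concat)
  then have "\<bar>\<Sum>u\<in>{p..<q}. g u\<bar> \<le> \<bar>\<Sum>u\<in>{p..<m}. g u\<bar> + \<bar>\<Sum>u\<in>{m..<q}. g u\<bar>"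
    by (simp add: abs_triangle_ineq)
  also have "\<dots> \<le> x + y" using assms(3,4) by (rule add_mono)
  finally show ?thesis .
qed

lemma aligned_interval_bound:
  fixes g :: "nat \<Rightarrow> 'a::ordered_ab_group_add_abs"
  assumes block: "\<And>t a. 2^t dvd a \<Longrightarrow> a + 2^t \<le> L \<Longrightarrow> \<bar>\<Sum>u\<in>{a..<a+2^t}. g u\<bar> \<le> B t"
    and B_nonneg: "\<And>t. 0 \<le> B t"
    and "2^T dvd p \<or> 2^T dvd q" "p \<le> q" "q < p + 2^T" "q \<le> L"
  shows "\<bar>\<Sum>u\<in>{p..<q}. g u\<bar> \<le> (\<Sum>t<T. B t)"
  using assms(3-)
proof (induction T arbitrary: p q)
  case 0
  then show ?case by simp
next
  case (Suc T)
  have T_dvd: "(2::nat)^T dvd 2^Suc T" by (simp add: le_imp_power_dvd)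
  show ?case
  proof (cases "q < p + 2^T")
    case True
    then have "\<bar>\<Sum>u\<in>{p..<q}. g u\<bar> \<le> (\<Sum>t<T. B t)"
      using Suc T_dvd dvd_trans by blast
    then show ?thesis using B_nonneg[of T] by (simp add: add_increasing2)
  next
    case False
    from Suc.prems(1) show ?thesis
    proof
      assume "2^Suc T dvd p"
      then have "2^T dvd p" using T_dvd dvd_trans by blast
      then have "\<bar>\<Sum>u\<in>{p..<p + 2^T}. g u\<bar> \<le> B T"
        using block False Suc.prems by simp
      moreover have "\<bar>\<Sum>u\<in>{p + 2^T..<q}. g u\<bar> \<le> (\<Sum>t<T. B t)"
        using Suc.IH[of "p + 2^T" q] \<open>2^T dvd p\<close> False Suc.prems by simp
      ultimately show ?thesis
        using abs_sum_atLeastLessThan_split_le[of p "p + 2^T" q] False by (simp add: add.commute)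
    next
      assume "2^Suc T dvd q"
      define m where "m = q - 2^T"
      have "2^T dvd m"
        using \<open>2^Suc T dvd q\<close> T_dvd unfolding m_def by (meson dvd_diff_nat dvd_refl dvd_trans)
      moreover have "m + 2^T = q" using False unfolding m_def by simp
      ultimately have "\<bar>\<Sum>u\<in>{m..<q}. g u\<bar> \<le> B T"
        using block[of T m] Suc.prems by simp
      moreover have "\<bar>\<Sum>u\<in>{p..<m}. g u\<bar> \<le> (\<Sum>t<T. B t)"
        using Suc.IH[of p m] \<open>2^T dvd m\<close> False Suc.prems unfolding m_def by simp
      moreover have "p \<le> m" "m \<le> q" using False unfolding m_def by simp_all
      ultimately show ?thesis
        using abs_sum_atLeastLessThan_split_le[of p m q g "\<Sum>t<T. B t" "B T"] by simp
    qed
  qed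
qed

lemma power_two_dvd_Suc_cases:
  fixes n :: nat
  assumes "2^T dvd n"
  shows "2^Suc T dvd n \<or> 2^Suc T dvd n + 2^T"
proof -
  obtain k where n: "n = 2^T * k" using assms by blast
  consider j where "k = 2 * j" | j where "k + 1 = 2 * j" by (metis evenE odd_add odd_one)
  then show ?thesis
  proof cases
    case (1 j)
    then have "n = 2^Suc T * j" unfolding n by simp
    then show ?thesis by simp
  next
    case (2 j)
    then have "n + 2^T = 2^Suc T * j" unfolding n by (metis distrib_left mult.assoc mult.right_neutral power_Suc2)
    then show ?thesis by simp
  qed
qed

lemma dyadic_split_point:
  fixes p q :: nat
  assumes "p \<le> q"
  obtains T m where "p \<le> m" "m \<le> q" "2^T dvd m" "m < p + 2^T" "q < m + 2^T"
proof -
  \<comment> \<open>The cap \<open>t \<le> q\<close> keeps \<open>S\<close> finite when \<open>p = 0\<close>, as every power of 2 divides 0.\<close>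
  define S where "S = {t. t \<le> q \<and> (\<exists>m. p \<le> m \<and> m \<le> q \<and> 2^t dvd m)}"
  define T where "T = Max S"
  have "finite S" unfolding S_def by simp
  moreover have "0 \<in> S" unfolding S_def using assms by auto
  ultimately have "T \<in> S" unfolding T_def using Max_in by blast
  then obtain m where m: "p \<le> m" "m \<le> q" "2^T dvd m" unfolding S_def by blast
  have no_finer: False if "p \<le> m'" "m' \<le> q" "2^Suc T dvd m'" "2^T \<le> q" for m'
  proof -
    have "T < q" using \<open>2^T \<le> q\<close> less_exp[of T] by linarith
    then have "Suc T \<in> S" unfolding S_def using that by auto
    then show False using Max_ge[OF \<open>finite S\<close>] unfolding T_def by fastforce
  qed
  have "m < p + 2^T"
  proof (rule ccontr)
    assume "\<not> m < p + 2^T"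
    then have "p \<le> m - 2^T" "2^T \<le> q" using m by linarith+
    moreover have "2^T dvd m - 2^T" using m(3) by (simp add: dvd_diff_nat)
    ultimately show False
      using power_two_dvd_Suc_cases[of T "m - 2^T"] no_finer m by fastforce
  qed
  moreover have "q < m + 2^T"
  proof (rule ccontr)
    assume "\<not> q < m + 2^T"
    then have "m + 2^T \<le> q" "2^T \<le> q" by linarith+
    then show False using power_two_dvd_Suc_cases[OF m(3)] no_finer m by fastforce
  qed
  ultimately show ?thesis using that m by blast
qed

lemma dyadic_interval_bound:
  fixes g :: "nat \<Rightarrow> 'a::linordered_idom"
  assumes block: "\<And>t a. 2^t dvd a \<Longrightarrow> a + 2^t \<le> L \<Longrightarrow> \<bar>\<Sum>u\<in>{a..<a+2^t}. g u\<bar> \<le> B t"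
    and B_nonneg: "\<And>t. 0 \<le> B t"
    and "p \<le> q" "q \<le> L"
  obtains T where "\<bar>\<Sum>u\<in>{p..<q}. g u\<bar> \<le> 2 * (\<Sum>t<T. B t)"
proof -
  obtain T m where m: "p \<le> m" "m \<le> q" "2^T dvd m" "m < p + 2^T" "q < m + 2^T"
    using dyadic_split_point[OF \<open>p \<le> q\<close>] .
  have "\<bar>\<Sum>u\<in>{p..<m}. g u\<bar> \<le> (\<Sum>t<T. B t)" "\<bar>\<Sum>u\<in>{m..<q}. g u\<bar> \<le> (\<Sum>t<T. B t)"
    using aligned_interval_bound[OF block B_nonneg] m \<open>q \<le> L\<close> by simp_all
  then have "\<bar>\<Sum>u\<in>{p..<q}. g u\<bar> \<le> 2 * (\<Sum>t<T. B t)"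
    using abs_sum_atLeastLessThan_split_le m(1,2) by (metis mult_2)
  then show ?thesis using that by blast
qed

lemma finite_box: "finite (box N)"
proof -
  have "box N \<subseteq> vec_lambda ` (\<Pi>\<^sub>E i\<in>UNIV. {1..int (N i)})"
  proof
    fix x assume "x \<in> box N"
    then have "(\<lambda>i. x$i) \<in> (\<Pi>\<^sub>E i\<in>UNIV. {1..int (N i)})" unfolding box_def by auto
    then show "x \<in> vec_lambda ` (\<Pi>\<^sub>E i\<in>UNIV. {1..int (N i)})" by (metis image_eqI vec_lambda_eta)
  qed
  then show ?thesis by (rule finite_subset) (simp add: finite_PiE)
qed

lemma vector_mul_rcancel_idom: "a *s x = b *s x \<longleftrightarrow> (a::'a::idom) = b \<or> x = 0"
proof
  assume eq: "a *s x = b *s x"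
  show "a = b \<or> x = 0"
  proof (rule disjCI)
    assume "x \<noteq> 0"
    then obtain i where "x$i \<noteq> 0" by (metis vec_eq_iff zero_index)
    moreover have "a * x$i = b * x$i" using eq by (metis vector_smult_component)
    ultimately show "a = b" by simp
  qed
qed auto

lemma dotz_add_smult: "dotz (x + k *s c) c = dotz x c + k * dotz c c"
  by (simp add: dotz_def algebra_simps sum.distrib sum_distrib_left)

lemma dotz_self_pos:
  assumes "c \<noteq> 0"
  shows "0 < dotz c c"
proof -
  obtain i where "c$i \<noteq> 0" using assms by (metis vec_eq_iff zero_index)
  then have "0 < c$i * c$i" by (simp add: zero_less_mult_iff) linarith
  also have "\<dots> \<le> (\<Sum>j\<in>UNIV. c$j * c$j)" by (rule member_le_sum) auto
  finally show ?thesis by (simp add: dotz_def)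
qed

lemma progression_through_point:
  assumes "x \<in> (\<lambda>i. a + int i *s c) ` {..<l}"
  obtains lo hi where "(\<lambda>i. a + int i *s c) ` {..<l} = (\<lambda>k. x + k *s c) ` {lo..<hi}"
proof -
  obtain i0 where x: "x = a + int i0 *s c" using assms by blast
  have shift: "a + int i *s c = x + (int i - int i0) *s c" for i
    unfolding x by (simp add: vec_eq_iff algebra_simps)
  have "(\<lambda>i. a + int i *s c) ` {..<l} = (\<lambda>k. x + k *s c) ` ((\<lambda>i. int i - int i0) ` {..<l})"
    by (simp only: shift image_image)
  also have "(\<lambda>i. int i - int i0) ` {..<l} = {- int i0..<int l - int i0}"
  proof
    show "{- int i0..<int l - int i0} \<subseteq> (\<lambda>i. int i - int i0) ` {..<l}"
    proof
      fix k assume "k \<in> {- int i0..<int l - int i0}"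
      then have "k = int (nat (k + int i0)) - int i0" "nat (k + int i0) < l" by auto
      then show "k \<in> (\<lambda>i. int i - int i0) ` {..<l}" by blast
    qed
  qed auto
  finally have "(\<lambda>i. a + int i *s c) ` {..<l} = (\<lambda>k. x + k *s c) ` {- int i0..<int l - int i0}" .
  then show ?thesis using that by blast
qed

lemma cong_class_eq_line: "cong_class X c x = (\<lambda>k. x + k *s c) ` {k. x + k *s c \<in> X}"
proof
  show "cong_class X c x \<subseteq> (\<lambda>k. x + k *s c) ` {k. x + k *s c \<in> X}"
  proof
    fix y assume "y \<in> cong_class X c x"
    then obtain k where "y \<in> X" "x - y = k *s c" unfolding cong_class_def cong_mod_def by auto
    moreover have "y = x + (- k) *s c"
      using \<open>x - y = k *s c\<close> by (simp add: vec_eq_iff algebra_simps)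
    ultimately show "y \<in> (\<lambda>k. x + k *s c) ` {k. x + k *s c \<in> X}" by blast
  qed
  show "(\<lambda>k. x + k *s c) ` {k. x + k *s c \<in> X} \<subseteq> cong_class X c x"
  proof
    fix y assume "y \<in> (\<lambda>k. x + k *s c) ` {k. x + k *s c \<in> X}"
    then obtain k where "y \<in> X" "y = x + k *s c" by blast
    moreover from \<open>y = x + k *s c\<close> have "x - y = (- k) *s c" by (simp add: vec_eq_iff)
    ultimately show "y \<in> cong_class X c x" unfolding cong_class_def cong_mod_def by blast
  qed
qed

lemma sorted_nth_preimage_interval:
  fixes ks :: "'a::linorder list"
  assumes "sorted ks"
  obtains p q where "p \<le> q" "q \<le> length ks" "{u. u < length ks \<and> ks ! u \<in> {lo..<hi}} = {p..<q}"
proof -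
  define U where "U = {u. u < length ks \<and> ks ! u \<in> {lo..<hi}}"
  show ?thesis
  proof (cases "U = {}")
    case True
    then show ?thesis using that[of 0 0] unfolding U_def by simp
  next
    case False
    have "finite U" unfolding U_def by simp
    then have min: "Min U \<in> U" and max: "Max U \<in> U" using False by simp_all
    then have bounds: "lo \<le> ks ! Min U" "ks ! Max U < hi" "Max U < length ks"
      unfolding U_def by simp_all
    have "U = {Min U..<Suc (Max U)}"
    proof
      show "U \<subseteq> {Min U..<Suc (Max U)}" using \<open>finite U\<close> by (auto simp: less_Suc_eq_le)
      show "{Min U..<Suc (Max U)} \<subseteq> U"
      proof
        fix u assume "u \<in> {Min U..<Suc (Max U)}"
        then have u: "Min U \<le> u" "u \<le> Max U" by simp_all
        then have "u < length ks" using bounds by simp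
        have "lo \<le> ks ! u"
          using bounds(1) sorted_nth_mono[OF assms u(1) \<open>u < length ks\<close>] by simp
        moreover have "ks ! u < hi"
          using bounds(2,3) sorted_nth_mono[OF assms u(2)] by simp
        ultimately show "u \<in> U" unfolding U_def using \<open>u < length ks\<close> by simp
      qed
    qed
    moreover have "Min U \<le> Suc (Max U)" "Suc (Max U) \<le> length ks"
      using Min_le[OF \<open>finite U\<close> max] bounds(3) by simp_all
    ultimately show ?thesis using that unfolding U_def by blast
  qed
qed

lemma set_take_drop_eq_nth_image:
  assumes "a + s \<le> length xs"
  shows "set (take s (drop a xs)) = (!) xs ` {a..<a + s}"
proof -
  have "take s (drop a xs) = map ((!) xs) [a..<a + s]"
    by (rule nth_equalityI) (use assms in auto)
  then show ?thesis by simp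
qed

lemma sum_nth_image_atLeastLessThan:
  assumes "distinct xs" "e \<le> length xs"
  shows "sum f ((!) xs ` {a..<e}) = (\<Sum>u\<in>{a..<e}. f (xs ! u))"
    and "card ((!) xs ` {a..<e}) = e - a"
proof -
  have "inj_on ((!) xs) {a..<e}" using inj_on_nth[OF assms(1)] assms(2) by simp
  then show "sum f ((!) xs ` {a..<e}) = (\<Sum>u\<in>{a..<e}. f (xs ! u))"
    and "card ((!) xs ` {a..<e}) = e - a"
    by (simp_all add: sum.reindex card_image)
qed

definition cong_class_listing :: "(int^'d::finite) set \<Rightarrow> int^'d \<Rightarrow> int^'d \<Rightarrow> (int^'d) list \<Rightarrow> bool"
  where "cong_class_listing X c x xs \<longleftrightarrow> c \<noteq> 0 \<and> x \<in> X \<and> distinct xs \<and>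
    set xs = cong_class X c x \<and> sorted_wrt (\<lambda>u v. dotz u c < dotz v c) xs"

lemma dyadic_block_in_CX:
  assumes "cong_class_listing X c x xs" "2^t dvd a" "a + 2^t \<le> length xs"
  shows "(!) xs ` {a..<a + 2^t} \<in> CX X"
proof -
  obtain j where a: "a = j * 2^t" using \<open>2^t dvd a\<close> by (metis dvd_def mult.commute)
  have "j + 1 \<le> length xs div 2^t"
    using \<open>a + 2^t \<le> length xs\<close> unfolding a by (simp add: less_eq_div_iff_mult_less_eq)
  moreover have "(!) xs ` {a..<a + 2^t} = set (take (2^t) (drop ((j + 1 - 1) * 2^t) xs))"
    using set_take_drop_eq_nth_image[OF \<open>a + 2^t \<le> length xs\<close>] unfolding a by simp
  ultimately show ?thesis
    using assms(1) unfolding CX_def cong_class_listing_def by fastforce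
qed

lemma dyadic_block_sum_bound:
  assumes "\<forall>S\<in>CX X. real_of_int \<bar>sum chi S\<bar> \<le> b (card S)"
    and "cong_class_listing X c x xs" "2^t dvd a" "a + 2^t \<le> length xs"
  shows "\<bar>\<Sum>u\<in>{a..<a + 2^t}. real_of_int (chi (xs ! u))\<bar> \<le> b (2^t)"
proof -
  have "distinct xs" using assms(2) unfolding cong_class_listing_def by blast
  have "real_of_int \<bar>sum chi ((!) xs ` {a..<a + 2^t})\<bar> \<le> b (card ((!) xs ` {a..<a + 2^t}))"
    using assms(1) dyadic_block_in_CX[OF assms(2-4)] by blast
  then show ?thesis
    by (simp add: sum_nth_image_atLeastLessThan[OF \<open>distinct xs\<close> assms(4)] del: of_int_sum) simp
qed

lemma AX_segment_of_cong_class: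
  assumes "finite X" "A \<in> AX N X" "x \<in> A"
  obtains c xs p q where "cong_class_listing X c x xs" "p \<le> q" "q \<le> length xs"
    "A = (!) xs ` {p..<q}"
proof -
  obtain P where "P \<in> APs N" and A: "A = P \<inter> X" using \<open>A \<in> AX N X\<close> unfolding AX_def by auto
  then obtain a c l where "c \<noteq> 0" and P: "P = (\<lambda>i. a + int i *s c) ` {..<l}"
    unfolding APs_def by auto
  define f where "f k = x + k *s c" for k
  obtain lo hi where P_line: "P = f ` {lo..<hi}"
    using progression_through_point \<open>x \<in> A\<close> unfolding A P f_def by blast
  have "inj f" unfolding f_def inj_def using \<open>c \<noteq> 0\<close> by (simp add: vector_mul_rcancel_idom)
  define ks where "ks = sorted_list_of_set (f -` X)"
  have "finite (f -` X)" using \<open>finite X\<close> \<open>inj f\<close> by (simp add: finite_vimageI)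
  then have set_ks: "set ks = f -` X" and "sorted_wrt (<) ks"
    unfolding ks_def by simp_all
  define xs where "xs = map f ks"
  obtain p q where pq: "p \<le> q" "q \<le> length ks" and
    run: "{u. u < length ks \<and> ks ! u \<in> {lo..<hi}} = {p..<q}"
    using sorted_nth_preimage_interval \<open>sorted_wrt (<) ks\<close> sorted_wrt_mono_rel
    by (metis order_less_imp_le)
  have "distinct xs"
    unfolding xs_def using \<open>inj f\<close> \<open>sorted_wrt (<) ks\<close>
    by (simp add: distinct_map strict_sorted_iff inj_on_subset[OF \<open>inj f\<close> subset_UNIV])
  moreover have "set xs = cong_class X c x"
    unfolding xs_def cong_class_eq_line set_map set_ks vimage_def f_def ..
  moreover have "sorted_wrt (\<lambda>u v. dotz u c < dotz v c) xs"
    unfolding xs_def sorted_wrt_map using \<open>sorted_wrt (<) ks\<close> dotz_self_pos[OF \<open>c \<noteq> 0\<close>]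
    by (simp add: f_def dotz_add_smult sorted_wrt_mono_rel)
  moreover have "x \<in> X" using \<open>x \<in> A\<close> unfolding A by blast
  ultimately have "cong_class_listing X c x xs"
    using \<open>c \<noteq> 0\<close> unfolding cong_class_listing_def by blast
  moreover have "A = (!) xs ` {p..<q}"
  proof -
    have "(!) ks ` {p..<q} = f -` X \<inter> {lo..<hi}"
      unfolding run[symmetric] set_ks[symmetric] by (auto simp: in_set_conv_nth)
    moreover have "(!) xs ` {p..<q} = f ` ((!) ks ` {p..<q})"
      unfolding xs_def image_image using pq by (intro image_cong) auto
    ultimately show ?thesis unfolding A P_line by auto
  qed
  moreover have "q \<le> length xs" using pq unfolding xs_def by simp
  ultimately show ?thesis using that \<open>p \<le> q\<close> by blast
qed

theorem lemma2p1:
  fixes N :: "'d::finite \<Rightarrow> nat" and X :: "(int^'d) set"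
    and b :: "nat \<Rightarrow> real" and chi :: "int^'d \<Rightarrow> int"
  assumes "\<forall>i. N i > 0"
    and "X \<subseteq> box N"
    and "\<forall>n\<ge>1. b n > 0"
    and "\<forall>x\<in>X. chi x \<in> {-1, 0, 1}"
    and "\<forall>S\<in>CX X. real_of_int \<bar>sum chi S\<bar> \<le> b (card S)"
  shows "\<forall>A\<in>AX N X. ennreal (real_of_int \<bar>sum chi A\<bar>) \<le> 2 * (\<Sum>t. ennreal (b (2^t)))"
proof
  fix A assume "A \<in> AX N X"
  show "ennreal (real_of_int \<bar>sum chi A\<bar>) \<le> 2 * (\<Sum>t. ennreal (b (2^t)))"
  proof (cases "A = {}")
    case False
    then obtain x where "x \<in> A" by blast
    have "finite X" using assms(2) finite_box finite_subset by blast
    then obtain c xs p q where listing: "cong_class_listing X c x xs"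
      and pq: "p \<le> q" "q \<le> length xs" and A: "A = (!) xs ` {p..<q}"
      using AX_segment_of_cong_class \<open>A \<in> AX N X\<close> \<open>x \<in> A\<close> by blast
    have b_nonneg: "0 \<le> b (2^t)" for t using assms(3) by (simp add: less_imp_le)
    obtain T where "\<bar>\<Sum>u\<in>{p..<q}. real_of_int (chi (xs ! u))\<bar> \<le> 2 * (\<Sum>t<T. b (2^t))"
      using dyadic_interval_bound[OF dyadic_block_sum_bound[OF assms(5) listing] b_nonneg pq] .
    moreover have "sum chi A = (\<Sum>u\<in>{p..<q}. chi (xs ! u))"
      using listing pq(2) unfolding A cong_class_listing_def by (simp add: sum_nth_image_atLeastLessThan)
    ultimately have "ennreal (real_of_int \<bar>sum chi A\<bar>) \<le> ennreal (2 * (\<Sum>t<T. b (2^t)))"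
      by (intro ennreal_leI) simp
    also have "\<dots> = 2 * (\<Sum>t<T. ennreal (b (2^t)))"
      using b_nonneg by (simp add: ennreal_mult sum_ennreal sum_nonneg)
    also have "\<dots> \<le> 2 * (\<Sum>t. ennreal (b (2^t)))"
      by (intro mult_left_mono sum_le_suminf summableI) auto
    finally show ?thesis .
  qed simp
qed

end
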